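(* Assume $G\in\mathcal{RH}_\infty$ and let $K=(I+QG_{yu})^{-1}Q$ with $Q\in\mathcal{RH}_\infty$ and $G_{wu}QG_{yv}=0$ (i.e. $K$ is a retrofit controller). Let $\overline{G}\in\overline{\mathcal G}$ and let $\overline{Q}:=\overline{G}(I-G_{wv}\overline{G})^{-1}\in\mathcal{RH}_\infty$ be its Youla parameter, so that $\overline{G}=(I+\overline{Q}G_{wv})^{-1}\overline{Q}$. Then the closed-loop transfer matrix $T_{zd}$ from $d$ to $z$ of the feedback system formed by $G$, $u=Ky$ and $v=\overline{G}w$ satisfies $$T_{zd}=M_{zd}(Q)+M_{zv}(Q)\,\overline{Q}\,M_{wd}(Q),$$ where $M_{zd}(Q):=G_{zd}+G_{zu}QG_{yd}$, $M_{zv}(Q):=G_{zv}+G_{zu}QG_{yv}$, $M_{wd}(Q):=G_{wd}+G_{wu}QG_{yd}$.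
   Context: A subsystem is a proper real rational transfer matrix $G$ with inputs $(v,d,u)$ (interaction input, disturbance input, control input) and outputs $(w,z,y)$ (interaction output, evaluation output, measurement output): $$\begin{bmatrix} w\\ z\\ y\end{bmatrix}=\begin{bmatrix} G_{wv}&G_{wd}&G_{wu}\\ G_{zv}&G_{zd}&G_{zu}\\ G_{yv}&G_{yd}&G_{yu}\end{bmatrix}\begin{bmatrix} v\\ d\\ u\end{bmatrix}.$$ An environment is a proper real rational transfer matrix $\overline{G}$ closing the interaction loop by $v=\overline{G}w$; a controller is a proper real rational $K$ closing $u=Ky$. $\mathcal{RH}_\infty$ is the set of stable, proper, real rational transfer matrices. All feedback interconnections are assumed well-posed; internal stability is in the standard sense. The preexisting system is $G_{\rm pre}$: the loop $w=G_{wv}v$, $v=\overline{G}w$. The set of admissible environments is $\overline{\mathcal G}:=\{\overline{G}: G_{\rm pre}\text{ is internally stable}\}$. *)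

theory Defs
  imports "HOL-Computational_Algebra.Polynomial" "HOL-Computational_Algebra.Fraction_Field"
    "Jordan_Normal_Form.Matrix"
begin

type_synonym rfun = "real poly fract"

definition proper_rat :: "rfun \<Rightarrow> bool" where
  "proper_rat f \<longleftrightarrow> (\<exists>p q. q \<noteq> 0 \<and> f = Fract p q \<and> degree p \<le> degree q)"

text \<open>Membership in RH-infinity (continuous time): proper, with all poles in the open left half plane.\<close>
definition stable_rat :: "rfun \<Rightarrow> bool" where
  "stable_rat f \<longleftrightarrow> (\<exists>p q. q \<noteq> 0 \<and> f = Fract p q \<and> degree p \<le> degree q \<and>
      (\<forall>z::complex. poly (map_poly complex_of_real q) z = 0 \<longrightarrow> Re z < 0))"

definition proper_mat :: "rfun mat \<Rightarrow> bool" where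
  "proper_mat A \<longleftrightarrow> (\<forall>i<dim_row A. \<forall>j<dim_col A. proper_rat (A $$ (i,j)))"

definition RH_mat :: "rfun mat \<Rightarrow> bool" where
  "RH_mat A \<longleftrightarrow> (\<forall>i<dim_row A. \<forall>j<dim_col A. stable_rat (A $$ (i,j)))"

text \<open>Matrix inverse (meaningful when the matrix is invertible).\<close>
definition minv :: "rfun mat \<Rightarrow> rfun mat" where
  "minv A = (SOME B. inverts_mat A B \<and> inverts_mat B A)"

text \<open>Internal stability of the feedback loop e1 = r1 + P e2, e2 = r2 + K e1 (P : m x n, K : n x m):
  the matrix [[I, -P], [-K, I]] is invertible (well-posedness) and its inverse is in RH-infinity.\<close>
definition internally_stable :: "nat \<Rightarrow> nat \<Rightarrow> rfun mat \<Rightarrow> rfun mat \<Rightarrow> bool" where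
  "internally_stable m n P K \<longleftrightarrow>
     (let F = four_block_mat (1\<^sub>m m) (- P) (- K) (1\<^sub>m n) in
      \<exists>M. M \<in> carrier_mat (m+n) (m+n) \<and> inverts_mat F M \<and> inverts_mat M F \<and> RH_mat M)"

definition loop_eqs ::
  "rfun mat \<Rightarrow> rfun mat \<Rightarrow> rfun mat \<Rightarrow> rfun mat \<Rightarrow> rfun mat \<Rightarrow> rfun mat \<Rightarrow>
   rfun mat \<Rightarrow> rfun mat \<Rightarrow> rfun mat \<Rightarrow> rfun mat \<Rightarrow> rfun mat \<Rightarrow>
   rfun vec \<Rightarrow> rfun vec \<Rightarrow> rfun vec \<Rightarrow> rfun vec \<Rightarrow> rfun vec \<Rightarrow> rfun vec \<Rightarrow> bool" where
  "loop_eqs Gwv Gwd Gwu Gzv Gzd Gzu Gyv Gyd Gyu K Gbar d w z y v u \<longleftrightarrow>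
     w = Gwv *\<^sub>v v + Gwd *\<^sub>v d + Gwu *\<^sub>v u \<and>
     z = Gzv *\<^sub>v v + Gzd *\<^sub>v d + Gzu *\<^sub>v u \<and>
     y = Gyv *\<^sub>v v + Gyd *\<^sub>v d + Gyu *\<^sub>v u \<and>
     v = Gbar *\<^sub>v w \<and> u = K *\<^sub>v y"

definition closed_loop_zd ::
  "nat \<Rightarrow> nat \<Rightarrow> nat \<Rightarrow> nat \<Rightarrow> nat \<Rightarrow> nat \<Rightarrow>
   rfun mat \<Rightarrow> rfun mat \<Rightarrow> rfun mat \<Rightarrow> rfun mat \<Rightarrow> rfun mat \<Rightarrow> rfun mat \<Rightarrow>
   rfun mat \<Rightarrow> rfun mat \<Rightarrow> rfun mat \<Rightarrow> rfun mat \<Rightarrow> rfun mat \<Rightarrow> rfun mat \<Rightarrow> bool" where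
  "closed_loop_zd nw nz ny nv nd nu Gwv Gwd Gwu Gzv Gzd Gzu Gyv Gyd Gyu K Gbar T \<longleftrightarrow>
     T \<in> carrier_mat nz nd \<and>
     (\<forall>d \<in> carrier_vec nd. \<forall>w z y v u.
        w \<in> carrier_vec nw \<longrightarrow> z \<in> carrier_vec nz \<longrightarrow> y \<in> carrier_vec ny \<longrightarrow>
        v \<in> carrier_vec nv \<longrightarrow> u \<in> carrier_vec nu \<longrightarrow>
        loop_eqs Gwv Gwd Gwu Gzv Gzd Gzu Gyv Gyd Gyu K Gbar d w z y v u \<longrightarrow> z = T *\<^sub>v d)"

definition well_posed ::
  "nat \<Rightarrow> nat \<Rightarrow> nat \<Rightarrow> nat \<Rightarrow> nat \<Rightarrow> nat \<Rightarrow>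
   rfun mat \<Rightarrow> rfun mat \<Rightarrow> rfun mat \<Rightarrow> rfun mat \<Rightarrow> rfun mat \<Rightarrow> rfun mat \<Rightarrow>
   rfun mat \<Rightarrow> rfun mat \<Rightarrow> rfun mat \<Rightarrow> rfun mat \<Rightarrow> rfun mat \<Rightarrow> bool" where
  "well_posed nw nz ny nv nd nu Gwv Gwd Gwu Gzv Gzd Gzu Gyv Gyd Gyu K Gbar \<longleftrightarrow>
     (\<forall>d \<in> carrier_vec nd. \<exists>!(w,z,y,v,u).
        w \<in> carrier_vec nw \<and> z \<in> carrier_vec nz \<and> y \<in> carrier_vec ny \<and>
        v \<in> carrier_vec nv \<and> u \<in> carrier_vec nu \<and>
        loop_eqs Gwv Gwd Gwu Gzv Gzd Gzu Gyv Gyd Gyu K Gbar d w z y v u)"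

end

theory Submission
  imports Defs "Jordan_Normal_Form.Determinant"
begin

text \<open>Since K = (I + Q Gyu)^-1 Q, the controller loop u = K y solves to
  u = Q (Gyv v + Gyd d): the measurement feedback through Gyu is exactly undone.
  Substituting, the subsystem seen from (v, d) becomes w = Gwv v + Mwd d and
  z = Mzv v + Mzd d, where the retrofit condition Gwu Q Gyv = 0 removes the only new
  contribution of v to w. So the interaction loop is the preexisting one, and closing it with
  v = Gbar w gives v = Gbar (I - Gwv Gbar)^-1 Mwd d; the inverse exists because internal
  stability of the preexisting system makes its loop matrix invertible.\<close>

lemma add_right_cancel_vec:
  fixes a b c :: "'a::cancel_semigroup_add vec"
  assumes "a \<in> carrier_vec n" "b \<in> carrier_vec n" "c \<in> carrier_vec n"
  shows "a + c = b + c \<longleftrightarrow> a = b"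
  using assms by (auto simp: vec_eq_iff)

lemma add_add_add_commute_vec:
  fixes a b c e :: "'a::ab_semigroup_add vec"
  assumes "a \<in> carrier_vec n" "b \<in> carrier_vec n" "c \<in> carrier_vec n" "e \<in> carrier_vec n"
  shows "a + b + (c + e) = a + c + (b + e)"
  using assms by (auto simp: vec_eq_iff ac_simps)

lemma invertible_mat_if_trivial_kernel:
  fixes A :: "'a::field mat"
  assumes A: "A \<in> carrier_mat n n"
    and kernel: "\<And>x. x \<in> carrier_vec n \<Longrightarrow> A *\<^sub>v x = 0\<^sub>v n \<Longrightarrow> x = 0\<^sub>v n"
  shows "invertible_mat A"
proof -
  have "det A \<noteq> 0" using det_0_iff_vec_prod_zero_field[OF A] kernel by auto
  from det_non_zero_imp_unit[OF A this, of "()"]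
  obtain B where "B \<in> carrier_mat n n" "B * A = 1\<^sub>m n" "A * B = 1\<^sub>m n"
    unfolding Units_def ring_mat_def by auto
  with A show ?thesis unfolding invertible_mat_def inverts_mat_def square_mat.simps by auto
qed

lemma minv_inverse:
  assumes inv: "invertible_mat A" and A: "A \<in> carrier_mat n n"
  shows "minv A \<in> carrier_mat n n" "A * minv A = 1\<^sub>m n" "minv A * A = 1\<^sub>m n"
proof -
  have "inverts_mat A (minv A) \<and> inverts_mat (minv A) A"
    using inv someI_ex[of "\<lambda>B. inverts_mat A B \<and> inverts_mat B A"]
    unfolding invertible_mat_def minv_def by blast
  then have AB: "A * minv A = 1\<^sub>m n" and BA: "minv A * A = 1\<^sub>m (dim_row (minv A))"
    using A unfolding inverts_mat_def by auto
  have "dim_col (minv A) = n" using arg_cong[OF AB, of dim_col] by simp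
  moreover have "dim_row (minv A) = n" using arg_cong[OF BA, of dim_col] A by simp
  ultimately show "minv A \<in> carrier_mat n n" "A * minv A = 1\<^sub>m n" "minv A * A = 1\<^sub>m n"
    using AB BA by auto
qed

text \<open>A kernel vector x of I - P K yields the kernel vector (x, K x) of the loop matrix.\<close>
lemma invertible_return_difference:
  fixes P K M :: "'a::field mat"
  assumes P: "P \<in> carrier_mat m n" and K: "K \<in> carrier_mat n m"
    and M: "M \<in> carrier_mat (m + n) (m + n)"
    and left_inverse: "M * four_block_mat (1\<^sub>m m) (- P) (- K) (1\<^sub>m n) = 1\<^sub>m (m + n)"
  shows "invertible_mat (1\<^sub>m m - P * K)"
proof (rule invertible_mat_if_trivial_kernel)
  show "1\<^sub>m m - P * K \<in> carrier_mat m m" using P K by auto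
  fix x :: "'a vec"
  assume x: "x \<in> carrier_vec m" and kernel: "(1\<^sub>m m - P * K) *\<^sub>v x = 0\<^sub>v m"
  let ?F = "four_block_mat (1\<^sub>m m) (- P) (- K) (1\<^sub>m n)"
  have Kx: "K *\<^sub>v x \<in> carrier_vec n" using K x by simp
  have "x + - (P *\<^sub>v (K *\<^sub>v x)) = 0\<^sub>v m"
    using kernel P K x
    by (simp add: minus_mult_distrib_mat_vec[of "1\<^sub>m m" m m] minus_add_uminus_vec[of _ m])
  then have "?F *\<^sub>v (x @\<^sub>v K *\<^sub>v x) = 0\<^sub>v m @\<^sub>v 0\<^sub>v n"
    using P K x Kx by (subst four_block_mat_mult_vec[of _ m m _ n _ n]) auto
  then have "?F *\<^sub>v (x @\<^sub>v K *\<^sub>v x) = 0\<^sub>v (m + n)" by auto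
  then have "(M * ?F) *\<^sub>v (x @\<^sub>v K *\<^sub>v x) = 0\<^sub>v (m + n)"
    using M P K x Kx by (subst assoc_mult_mat_vec[of _ "m + n" "m + n"]) auto
  then have "x @\<^sub>v K *\<^sub>v x = 0\<^sub>v m @\<^sub>v 0\<^sub>v n"
    using left_inverse x Kx by auto
  then show "x = 0\<^sub>v m" using x Kx by simp
qed

lemma controller_loop_solution:
  fixes Q Gyu Ai :: "'a::comm_ring_1 mat"
  assumes Q: "Q \<in> carrier_mat nu ny" and Gyu: "Gyu \<in> carrier_mat ny nu"
    and Ai: "Ai \<in> carrier_mat nu nu" and inv: "(1\<^sub>m nu + Q * Gyu) * Ai = 1\<^sub>m nu"
    and r: "r \<in> carrier_vec ny" and u: "u \<in> carrier_vec nu"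
    and loop: "u = (Ai * Q) *\<^sub>v (r + Gyu *\<^sub>v u)"
  shows "u = Q *\<^sub>v r"
proof -
  let ?A = "1\<^sub>m nu + Q * Gyu" and ?x = "r + Gyu *\<^sub>v u"
  have A: "?A \<in> carrier_mat nu nu" using Q Gyu by simp
  have x: "?x \<in> carrier_vec ny" using Gyu r u by simp
  have "?A *\<^sub>v u = ?A *\<^sub>v ((Ai * Q) *\<^sub>v ?x)" using loop by (rule arg_cong)
  also have "\<dots> = (?A * (Ai * Q)) *\<^sub>v ?x"
    using A Q Ai x by (simp add: assoc_mult_mat_vec[of _ nu nu _ ny])
  also have "\<dots> = Q *\<^sub>v ?x"
    using Q x by (subst assoc_mult_mat[symmetric, OF A Ai Q]) (simp add: inv)
  finally have "?A *\<^sub>v u = Q *\<^sub>v ?x" .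
  then have "u + Q *\<^sub>v (Gyu *\<^sub>v u) = Q *\<^sub>v r + Q *\<^sub>v (Gyu *\<^sub>v u)"
    using Q Gyu r u
    by (simp add: add_mult_distrib_mat_vec[of "1\<^sub>m nu" nu nu] mult_add_distrib_mat_vec[of Q nu ny])
  then show ?thesis using Q Gyu r u by (simp add: add_right_cancel_vec)
qed

lemma environment_loop_solution:
  fixes Gwv Gbar Bi :: "'a::comm_ring_1 mat"
  assumes Gwv: "Gwv \<in> carrier_mat nw nv" and Gbar: "Gbar \<in> carrier_mat nv nw"
    and Bi: "Bi \<in> carrier_mat nw nw" and inv: "Bi * (1\<^sub>m nw - Gwv * Gbar) = 1\<^sub>m nw"
    and e: "e \<in> carrier_vec nw" and w: "w \<in> carrier_vec nw"
    and loop: "w = Gwv *\<^sub>v (Gbar *\<^sub>v w) + e"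
  shows "w = Bi *\<^sub>v e"
proof -
  define g where "g = Gwv *\<^sub>v (Gbar *\<^sub>v w)"
  have g: "g \<in> carrier_vec nw" using Gwv Gbar w by (simp add: g_def)
  have "(1\<^sub>m nw - Gwv * Gbar) *\<^sub>v w = w - g"
    using Gwv Gbar w by (simp add: g_def minus_mult_distrib_mat_vec[of "1\<^sub>m nw" nw nw])
  also have "\<dots> = e"
    using g e unfolding loop[folded g_def] by (auto simp: vec_eq_iff)
  finally have "(Bi * (1\<^sub>m nw - Gwv * Gbar)) *\<^sub>v w = Bi *\<^sub>v e"
    using Gwv Gbar Bi w by (subst assoc_mult_mat_vec[of _ nw nw]) auto
  then show ?thesis using inv w by simp
qed

lemma retrofit_loop_reduction:
  fixes Gwv Gwd Gwu Gzv Gzd Gzu Gyv Gyd Gyu Q Gbar Ai :: "rfun mat"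
  assumes dims:
      "Gwv \<in> carrier_mat nw nv" "Gwd \<in> carrier_mat nw nd" "Gwu \<in> carrier_mat nw nu"
      "Gzv \<in> carrier_mat nz nv" "Gzd \<in> carrier_mat nz nd" "Gzu \<in> carrier_mat nz nu"
      "Gyv \<in> carrier_mat ny nv" "Gyd \<in> carrier_mat ny nd" "Gyu \<in> carrier_mat ny nu"
      "Q \<in> carrier_mat nu ny"
    and Ai: "Ai \<in> carrier_mat nu nu" "(1\<^sub>m nu + Q * Gyu) * Ai = 1\<^sub>m nu"
    and retrofit: "Gwu * Q * Gyv = 0\<^sub>m nw nv"
    and signals: "d \<in> carrier_vec nd" "v \<in> carrier_vec nv" "u \<in> carrier_vec nu"
    and loop: "loop_eqs Gwv Gwd Gwu Gzv Gzd Gzu Gyv Gyd Gyu (Ai * Q) Gbar d w z y v u"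
  shows "w = Gwv *\<^sub>v v + (Gwd + Gwu * Q * Gyd) *\<^sub>v d"
    and "z = (Gzv + Gzu * Q * Gyv) *\<^sub>v v + (Gzd + Gzu * Q * Gyd) *\<^sub>v d"
proof -
  have w_eq: "w = Gwv *\<^sub>v v + Gwd *\<^sub>v d + Gwu *\<^sub>v u"
    and z_eq: "z = Gzv *\<^sub>v v + Gzd *\<^sub>v d + Gzu *\<^sub>v u"
    and u_eq: "u = (Ai * Q) *\<^sub>v (Gyv *\<^sub>v v + Gyd *\<^sub>v d + Gyu *\<^sub>v u)"
    using loop unfolding loop_eqs_def by blast+
  have "u = Q *\<^sub>v (Gyv *\<^sub>v v + Gyd *\<^sub>v d)"
    by (rule controller_loop_solution[OF dims(10,9) Ai _ signals(3) u_eq]) (use dims signals in simp)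
  then have through_u: "G *\<^sub>v u = (G * Q * Gyv) *\<^sub>v v + (G * Q * Gyd) *\<^sub>v d"
    if "G \<in> carrier_mat n nu" for G n
    using that dims signals
    by (simp add: mult_add_distrib_mat_vec[of Q nu ny] mult_add_distrib_mat_vec[of G n nu]
        assoc_mult_mat_vec[of G n nu "Q * Gyv" nv]
        assoc_mult_mat_vec[of G n nu "Q * Gyd" nd])
  define Xw Xz Yz where "Xw = Gwu * Q * Gyd" and "Xz = Gzu * Q * Gyd" and "Yz = Gzu * Q * Gyv"
  have X: "Xw \<in> carrier_mat nw nd" "Xz \<in> carrier_mat nz nd" "Yz \<in> carrier_mat nz nv"
    unfolding Xw_def Xz_def Yz_def using dims by auto
  have "(0\<^sub>m nw nv :: rfun mat) *\<^sub>v v = 0\<^sub>v nw" by (rule eq_vecI) (use signals in auto)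
  then have Gwu_u: "Gwu *\<^sub>v u = Xw *\<^sub>v d"
    using through_u[OF dims(3), folded Xw_def] retrofit X(1) signals by simp
  show "w = Gwv *\<^sub>v v + (Gwd + Gwu * Q * Gyd) *\<^sub>v d"
    unfolding w_eq Gwu_u Xw_def[symmetric] using dims X signals
    by (simp add: add_mult_distrib_mat_vec[of _ nw nd] assoc_add_vec[of _ nw])
  show "z = (Gzv + Gzu * Q * Gyv) *\<^sub>v v + (Gzd + Gzu * Q * Gyd) *\<^sub>v d"
    unfolding z_eq through_u[OF dims(6), folded Xz_def Yz_def] Xz_def[symmetric] Yz_def[symmetric]
    using dims X signals
    by (simp add: add_mult_distrib_mat_vec[of _ nz nd] add_mult_distrib_mat_vec[of _ nz nv]
        add_add_add_commute_vec[of _ nz] del: assoc_add_vec)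
qed

lemma retrofit_closed_loop_zd:
  fixes Gwv Gwd Gwu Gzv Gzd Gzu Gyv Gyd Gyu Q Gbar Ai Bi :: "rfun mat"
  assumes dims:
      "Gwv \<in> carrier_mat nw nv" "Gwd \<in> carrier_mat nw nd" "Gwu \<in> carrier_mat nw nu"
      "Gzv \<in> carrier_mat nz nv" "Gzd \<in> carrier_mat nz nd" "Gzu \<in> carrier_mat nz nu"
      "Gyv \<in> carrier_mat ny nv" "Gyd \<in> carrier_mat ny nd" "Gyu \<in> carrier_mat ny nu"
      "Q \<in> carrier_mat nu ny" "Gbar \<in> carrier_mat nv nw"
    and Ai: "Ai \<in> carrier_mat nu nu" "(1\<^sub>m nu + Q * Gyu) * Ai = 1\<^sub>m nu"
    and Bi: "Bi \<in> carrier_mat nw nw" "Bi * (1\<^sub>m nw - Gwv * Gbar) = 1\<^sub>m nw"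
    and retrofit: "Gwu * Q * Gyv = 0\<^sub>m nw nv"
  shows "closed_loop_zd nw nz ny nv nd nu Gwv Gwd Gwu Gzv Gzd Gzu Gyv Gyd Gyu (Ai * Q) Gbar
           ((Gzd + Gzu * Q * Gyd) + (Gzv + Gzu * Q * Gyv) * (Gbar * Bi) * (Gwd + Gwu * Q * Gyd))"
proof -
  define Mzd where "Mzd = Gzd + Gzu * Q * Gyd"
  define Mzv where "Mzv = Gzv + Gzu * Q * Gyv"
  define Mwd where "Mwd = Gwd + Gwu * Q * Gyd"
  have M: "Mzd \<in> carrier_mat nz nd" "Mzv \<in> carrier_mat nz nv" "Mwd \<in> carrier_mat nw nd"
    unfolding Mzd_def Mzv_def Mwd_def using dims by auto
  show ?thesis
    unfolding closed_loop_zd_def Mzd_def[symmetric] Mzv_def[symmetric] Mwd_def[symmetric]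
  proof (intro conjI ballI allI impI)
    show "Mzd + Mzv * (Gbar * Bi) * Mwd \<in> carrier_mat nz nd" using M dims Bi by auto
    fix d w z y v u
    assume d: "d \<in> carrier_vec nd" and w: "w \<in> carrier_vec nw" and "z \<in> carrier_vec nz"
      and "y \<in> carrier_vec ny" and v: "v \<in> carrier_vec nv" and u: "u \<in> carrier_vec nu"
      and loop: "loop_eqs Gwv Gwd Gwu Gzv Gzd Gzu Gyv Gyd Gyu (Ai * Q) Gbar d w z y v u"
    note reduced = retrofit_loop_reduction[OF dims(1-10) Ai retrofit d v u loop,
        folded Mzd_def Mzv_def Mwd_def]
    have v_w: "v = Gbar *\<^sub>v w" using loop unfolding loop_eqs_def by blast
    have "w = Gwv *\<^sub>v (Gbar *\<^sub>v w) + Mwd *\<^sub>v d"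
      unfolding v_w[symmetric] by (rule reduced(1))
    moreover have "Mwd *\<^sub>v d \<in> carrier_vec nw" using M d by simp
    ultimately have "w = Bi *\<^sub>v (Mwd *\<^sub>v d)"
      using environment_loop_solution[OF dims(1,11) Bi] w by blast
    then have v_eq: "v = (Gbar * Bi) *\<^sub>v (Mwd *\<^sub>v d)" using v_w dims Bi M d by simp
    have Qbar: "Gbar * Bi \<in> carrier_mat nv nw" and MQbar: "Mzv * (Gbar * Bi) \<in> carrier_mat nz nw"
      using dims Bi M by auto
    have "z = Mzd *\<^sub>v d + Mzv *\<^sub>v v"
      unfolding reduced(2) by (rule comm_add_vec[of _ nz]) (use M d v in auto)
    also have "Mzv *\<^sub>v v = (Mzv * (Gbar * Bi) * Mwd) *\<^sub>v d"
      using MQbar Qbar M d unfolding v_eq by (metis assoc_mult_mat_vec mult_mat_vec_carrier)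
    also have "Mzd *\<^sub>v d + (Mzv * (Gbar * Bi) * Mwd) *\<^sub>v d = (Mzd + Mzv * (Gbar * Bi) * Mwd) *\<^sub>v d"
      using MQbar M d by (intro add_mult_distrib_mat_vec[symmetric, of _ nz nd]) auto
    finally show "z = (Mzd + Mzv * (Gbar * Bi) * Mwd) *\<^sub>v d" .
  qed
qed

theorem theorem2:
  fixes nw nz ny nv nd nu :: nat
    and Gwv Gwd Gwu Gzv Gzd Gzu Gyv Gyd Gyu Q Gbar :: "rfun mat"
  assumes dims:
      "Gwv \<in> carrier_mat nw nv" "Gwd \<in> carrier_mat nw nd" "Gwu \<in> carrier_mat nw nu"
      "Gzv \<in> carrier_mat nz nv" "Gzd \<in> carrier_mat nz nd" "Gzu \<in> carrier_mat nz nu"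
      "Gyv \<in> carrier_mat ny nv" "Gyd \<in> carrier_mat ny nd" "Gyu \<in> carrier_mat ny nu"
      "Q \<in> carrier_mat nu ny" "Gbar \<in> carrier_mat nv nw"
    and G_stable: "RH_mat Gwv" "RH_mat Gwd" "RH_mat Gwu" "RH_mat Gzv" "RH_mat Gzd"
      "RH_mat Gzu" "RH_mat Gyv" "RH_mat Gyd" "RH_mat Gyu"
    and Q_stable: "RH_mat Q"
    and K_wp: "invertible_mat (1\<^sub>m nu + Q * Gyu)"
    and retrofit: "Gwu * Q * Gyv = 0\<^sub>m nw nv"
    and Gbar_proper: "proper_mat Gbar"
    and Gbar_adm: "internally_stable nw nv Gwv Gbar"
    and wp: "well_posed nw nz ny nv nd nu Gwv Gwd Gwu Gzv Gzd Gzu Gyv Gyd Gyu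
               (minv (1\<^sub>m nu + Q * Gyu) * Q) Gbar"
  shows "let K = minv (1\<^sub>m nu + Q * Gyu) * Q;
             Qbar = Gbar * minv (1\<^sub>m nw - Gwv * Gbar);
             Mzd = Gzd + Gzu * Q * Gyd;
             Mzv = Gzv + Gzu * Q * Gyv;
             Mwd = Gwd + Gwu * Q * Gyd
         in closed_loop_zd nw nz ny nv nd nu Gwv Gwd Gwu Gzv Gzd Gzu Gyv Gyd Gyu K Gbar
              (Mzd + Mzv * Qbar * Mwd)"
proof -
  obtain M where "M \<in> carrier_mat (nw + nv) (nw + nv)"
    and "M * four_block_mat (1\<^sub>m nw) (- Gwv) (- Gbar) (1\<^sub>m nv) = 1\<^sub>m (nw + nv)"
    using Gbar_adm unfolding internally_stable_def Let_def inverts_mat_def by auto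
  then have "invertible_mat (1\<^sub>m nw - Gwv * Gbar)"
    by (rule invertible_return_difference[OF dims(1,11)])
  moreover have "1\<^sub>m nw - Gwv * Gbar \<in> carrier_mat nw nw" using dims by auto
  ultimately have env_inverse: "minv (1\<^sub>m nw - Gwv * Gbar) \<in> carrier_mat nw nw"
    "minv (1\<^sub>m nw - Gwv * Gbar) * (1\<^sub>m nw - Gwv * Gbar) = 1\<^sub>m nw"
    by (simp_all add: minv_inverse)
  have "1\<^sub>m nu + Q * Gyu \<in> carrier_mat nu nu" using dims by auto
  note controller_inverse = minv_inverse[OF K_wp this]
  show ?thesis
    unfolding Let_def
    by (rule retrofit_closed_loop_zd[OF dims controller_inverse(1,2) env_inverse retrofit])
qed

end
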